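(* The following hold. (1) If $f\in\mathcal{C}^1(\mathbb{R})$ then $f^*\cdot\chi_{[-\beta,\beta]_{\mathbb{R}^*}}\in\mathfrak{U}(\mathbb{R})$. (2) If $u\in\mathfrak{U}(\mathbb{R})$ and $a,b\in\Gamma$, then $u\cdot\chi_{[a,b]_{\mathbb{R}^*}}\in\mathfrak{U}(\mathbb{R})$. (3) If $u\in\mathfrak{U}(\mathbb{R})$, then for $j=1,\dots,\ell-1$ the (internal) one-sided limits $u(\gamma_j^+)=(\lim_{x\to\gamma_j^+})^*u(x)$ and $u(\gamma_j^-)=(\lim_{x\to\gamma_j^-})^*u(x)$ are well defined. (4) If $u\in\mathfrak{U}(\mathbb{R})$, the limits $(\lim_{x\to\gamma_0^+})^*u(x)$ and $(\lim_{x\to\gamma_\ell^-})^*u(x)$ are well defined. (5) For $j=0,\dots,\ell-1$ let $V(\mathbb{I}_j)=\{u\chi_j: u\in\widetilde{\mathcal{C}^1(\mathbb{R})}\}$. Then for $j\neq k$, $V(\mathbb{I}_j)$ and $V(\mathbb{I}_k)$ are orthogonal with respect to $(u,v)=\int^*uv\,dx$. (6) $\mathfrak{U}(\mathbb{R})=\bigoplus_{j=0}^{\ell-1}V(\mathbb{I}_j)$ as an orthogonal direct sum.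
   Context: Framework (Λ-limits / nonstandard analysis): $\mathfrak{X}=\mathcal{P}_{fin}(\mathfrak{F}(\mathbb{R},\mathbb{R}))$ directed by inclusion; $\mathbb{R}^*\supset\mathbb{R}$ is a non-Archimedean ordered field of Λ-limits of nets $\mathfrak{X}\to\mathbb{R}$; internal sets/functions are Λ-limits of nets of sets/functions, $E^*$, $f^*$ natural extensions, hyperfinite sums are Λ-limits of finite sums; $\int^*$ is the natural extension of the Lebesgue integral. For $\lambda\in\mathfrak{X}$, $V_\lambda$ is the span of $\lambda$; an internal $u=\lim_{\lambda\uparrow\Lambda}u_\lambda$ is an ultrafunction if $u_\lambda\in V_\lambda$ for all $\lambda$; for a vector space $W$ of real functions, $\widetilde{W}=W^*\cap\{\text{ultrafunctions}\}$. Grid: a positive infinite $\beta\in\mathbb{R}^*$ and a hyperfinite $\Gamma=\{\gamma_0<\dots<\gamma_\ell\}\subset\mathbb{R}^*$ with $\gamma_0=-\beta$, $\gamma_\ell=\beta$, $0<\gamma_{j+1}-\gamma_j<\eta$ for a fixed infinitesimal $\eta$, and $\mathbb{R}\subseteq\Gamma$. $\mathbb{I}_j=(\gamma_j,\gamma_{j+1})_{\mathbb{R}^*}$, $\chi_j$ its characteristic function ($j=0,\dots,\ell-1$). For $a,b\in\Gamma$, $\chi_{[a,b]_{\mathbb{R}^*}}(x)$ equals $1$ for $x\in(a,b)$, $0$ for $x\notin[a,b]$, $\tfrac12$ for $x=a\neq-\beta$ or $x=b\neq\beta$, and $1$ for $x=a=-\beta$ or $x=b=\beta$. $\mathfrak{U}(\mathbb{R})$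 is the set of $u:[-\beta,\beta]\to\mathbb{R}^*$ representable as an internal hyperfinite sum $u=\sum_{j=0}^{\ell-1}v_j\chi_j$ with $v_j\in\widetilde{\mathcal{C}^1(\mathbb{R})}$. *)

theory Defs
  imports "HOL-Analysis.Analysis"
begin

text \<open>Lambda-theory modelled at the level of nets indexed by
 \<open>\<lambda> \<in> P_fin(F(R,R))\<close>, modulo a fine ultrafilter U (the Lambda-limit
 identifies nets which agree U-eventually).  An element of R* is represented
 by a net idx => real, an internal function by a net idx => real => real,
 a hyperfinite index by a natural number inside the eventually-quantifier.\<close>

type_synonym idx = "(real \<Rightarrow> real) set"

definition fine_ultrafilter :: "idx filter \<Rightarrow> bool" where
  "fine_ultrafilter U \<longleftrightarrow> U \<noteq> bot
     \<and> (\<forall>P. eventually P U \<or> eventually (\<lambda>l. \<not> P l) U)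
     \<and> eventually finite U
     \<and> (\<forall>f. eventually (\<lambda>l. f \<in> l) U)"

definition C1 :: "(real \<Rightarrow> real) set" where
  "C1 = {f. \<exists>f'. (\<forall>x. (f has_real_derivative f' x) (at x)) \<and> continuous_on UNIV f'}"

definition Vspan :: "idx \<Rightarrow> (real \<Rightarrow> real) set" where
  "Vspan l = {g. \<exists>c. g = (\<lambda>x. \<Sum>h\<in>l. c h * h x)}"

text \<open>the internal set  \<open>\<widetilde>{C^1(R)}\<close> = C^1(R)^* \<inter> ultrafunctions\<close>
definition ultraC1 :: "idx filter \<Rightarrow> (idx \<Rightarrow> real \<Rightarrow> real) \<Rightarrow> bool" where
  "ultraC1 U u \<longleftrightarrow> eventually (\<lambda>l. u l \<in> Vspan l \<and> u l \<in> C1) U"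

text \<open>The grid: beta positive infinite, eta positive infinitesimal,
 Gamma = {gamma_0 < ... < gamma_ell} hyperfinite, gamma_0 = -beta, gamma_ell = beta,
 mesh < eta, and R \<subseteq> Gamma.\<close>
definition grid :: "idx filter \<Rightarrow> (idx \<Rightarrow> real) \<Rightarrow> (idx \<Rightarrow> real) \<Rightarrow> (idx \<Rightarrow> nat)
     \<Rightarrow> (idx \<Rightarrow> nat \<Rightarrow> real) \<Rightarrow> bool" where
  "grid U \<beta> \<eta> ell \<gamma> \<longleftrightarrow>
     (\<forall>M::real. eventually (\<lambda>l. \<beta> l > M) U)
   \<and> eventually (\<lambda>l. \<eta> l > 0) U
   \<and> (\<forall>e::real. e > 0 \<longrightarrow> eventually (\<lambda>l. \<eta> l < e) U)
   \<and> eventually (\<lambda>l. \<gamma> l 0 = - \<beta> l \<and> \<gamma> l (ell l) = \<beta> l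
        \<and> (\<forall>j < ell l. 0 < \<gamma> l (Suc j) - \<gamma> l j \<and> \<gamma> l (Suc j) - \<gamma> l j < \<eta> l)) U
   \<and> (\<forall>r::real. eventually (\<lambda>l. r \<in> \<gamma> l ` {0..ell l}) U)"

definition in_grid :: "idx filter \<Rightarrow> (idx \<Rightarrow> nat) \<Rightarrow> (idx \<Rightarrow> nat \<Rightarrow> real) \<Rightarrow> (idx \<Rightarrow> real) \<Rightarrow> bool" where
  "in_grid U ell \<gamma> a \<longleftrightarrow> eventually (\<lambda>l. a l \<in> \<gamma> l ` {0..ell l}) U"

definition chi :: "(nat \<Rightarrow> real) \<Rightarrow> nat \<Rightarrow> real \<Rightarrow> real" where
  "chi g j x = (if g j < x \<and> x < g (Suc j) then 1 else 0)"

definition chi_ab :: "real \<Rightarrow> real \<Rightarrow> real \<Rightarrow> real \<Rightarrow> real" where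
  "chi_ab \<beta> a b x =
     (if a < x \<and> x < b then 1
      else if x \<notin> {a..b} then 0
      else if (x = a \<and> a = - \<beta>) \<or> (x = b \<and> b = \<beta>) then 1
      else 1/2)"

definition offgrid :: "real \<Rightarrow> nat \<Rightarrow> (nat \<Rightarrow> real) \<Rightarrow> real set" where
  "offgrid \<beta> n g = {-\<beta>..\<beta>} - g ` {0..n}"

text \<open>u \<in> U(R): u = sum_{j<ell} v_j chi_j with (v_j) an internal family in
 \<open>\<widetilde>{C^1(R)}\<close>; the representation is required on [-beta,beta] off the grid.\<close>
definition inUR :: "idx filter \<Rightarrow> (idx \<Rightarrow> real) \<Rightarrow> (idx \<Rightarrow> nat) \<Rightarrow> (idx \<Rightarrow> nat \<Rightarrow> real)
     \<Rightarrow> (idx \<Rightarrow> real \<Rightarrow> real) \<Rightarrow> bool" where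
  "inUR U \<beta> ell \<gamma> u \<longleftrightarrow> eventually (\<lambda>l. \<exists>v :: nat \<Rightarrow> real \<Rightarrow> real.
      (\<forall>j < ell l. v j \<in> Vspan l \<and> v j \<in> C1)
    \<and> (\<forall>x \<in> offgrid (\<beta> l) (ell l) (\<gamma> l). u l x = (\<Sum>j<ell l. v j x * chi (\<gamma> l) j x))) U"

definition VI :: "idx \<Rightarrow> (nat \<Rightarrow> real) \<Rightarrow> nat \<Rightarrow> (real \<Rightarrow> real) set" where
  "VI l g j = {(\<lambda>x. v x * chi g j x) | v. v \<in> Vspan l \<and> v \<in> C1}"

text \<open>(u,v) = integral of u v (levelwise; the internal one is its Lambda-limit)\<close>
definition hinner :: "(real \<Rightarrow> real) \<Rightarrow> (real \<Rightarrow> real) \<Rightarrow> real" where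
  "hinner f g = (LINT x|lborel. f x * g x)"

end

theory Submission
  imports Defs
begin

text \<open>All six assertions hold at each level \<open>l\<close> of the net and pass to the \<open>\<Lambda>\<close>-limit
  through \<open>eventually\<close>.  At a fixed level the grid cuts \<open>[-\<beta>, \<beta>]\<close> into finitely many open
  cells and off the grid exactly one \<open>chi g j\<close> is nonzero.  Hence a member of \<open>\<UU>(\<real>)\<close>
  agrees on each cell with a \<open>C\<^sup>1\<close> function, which yields the one-sided limits at grid
  points; its cell components are unique and pairwise orthogonal; and since a grid point never
  lies inside a cell, \<open>\<chi>\<^sub>[\<^sub>a\<^sub>,\<^sub>b\<^sub>]\<close> is constant on every cell and only rescales the components.\<close>

definition grid_partition :: "real \<Rightarrow> nat \<Rightarrow> (nat \<Rightarrow> real) \<Rightarrow> bool" where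
  "grid_partition b n g \<longleftrightarrow> g 0 = - b \<and> g n = b \<and> (\<forall>j<n. g j < g (Suc j))"

definition piecewise_C1 :: "idx \<Rightarrow> real \<Rightarrow> nat \<Rightarrow> (nat \<Rightarrow> real) \<Rightarrow> (real \<Rightarrow> real) \<Rightarrow> bool" where
  "piecewise_C1 l b n g u \<longleftrightarrow> (\<exists>v :: nat \<Rightarrow> real \<Rightarrow> real.
      (\<forall>j<n. v j \<in> Vspan l \<and> v j \<in> C1)
    \<and> (\<forall>x \<in> offgrid b n g. u x = (\<Sum>j<n. v j x * chi g j x)))"

lemma inUR_iff_eventually_piecewise_C1:
  "inUR U \<beta> ell \<gamma> u \<longleftrightarrow> eventually (\<lambda>l. piecewise_C1 l (\<beta> l) (ell l) (\<gamma> l) (u l)) U"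
  unfolding inUR_def piecewise_C1_def ..

lemma grid_eventually_partition:
  assumes "grid U \<beta> \<eta> ell \<gamma>"
  shows "eventually (\<lambda>l. grid_partition (\<beta> l) (ell l) (\<gamma> l)) U"
proof -
  have "eventually (\<lambda>l. \<gamma> l 0 = - \<beta> l \<and> \<gamma> l (ell l) = \<beta> l
        \<and> (\<forall>j < ell l. 0 < \<gamma> l (Suc j) - \<gamma> l j \<and> \<gamma> l (Suc j) - \<gamma> l j < \<eta> l)) U"
    using assms unfolding grid_def by blast
  then show ?thesis by eventually_elim (auto simp: grid_partition_def)
qed

lemma grid_eventually_pos: "grid U \<beta> \<eta> ell \<gamma> \<Longrightarrow> eventually (\<lambda>l. \<beta> l > 0) U"
  unfolding grid_def by auto

lemma grid_partition_less:
  assumes "grid_partition b n g" "i < k" "k \<le> n"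
  shows "g i < g k"
proof (rule lift_Suc_mono_less_ivl[where N = "{..<n}"])
  show "\<And>m. m \<in> {..<n} \<Longrightarrow> g m < g (Suc m)" using assms(1) by (simp add: grid_partition_def)
qed (use assms(2,3) in auto)

lemma grid_partition_le:
  assumes "grid_partition b n g" "i \<le> k" "k \<le> n"
  shows "g i \<le> g k"
  using grid_partition_less[OF assms(1), of i k] assms(2,3) by (cases "i = k") auto

lemma grid_point_notin_cell:
  assumes "grid_partition b n g" "i \<le> n" "j < n"
  shows "g i \<notin> {g j<..<g (Suc j)}"
  using grid_partition_le[OF assms(1), of i j] grid_partition_le[OF assms(1), of "Suc j" i] assms
  by (cases "i \<le> j") auto

lemma cell_subset_offgrid:
  assumes "grid_partition b n g" "j < n"
  shows "{g j<..<g (Suc j)} \<subseteq> offgrid b n g"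
proof
  fix x assume x: "x \<in> {g j<..<g (Suc j)}"
  have "g 0 \<le> g j" "g (Suc j) \<le> g n"
    using grid_partition_le[OF assms(1)] assms(2) by auto
  moreover have "x \<notin> g ` {0..n}"
    using grid_point_notin_cell[OF assms(1) _ assms(2)] x by auto
  ultimately show "x \<in> offgrid b n g"
    using x assms(1) by (auto simp: offgrid_def grid_partition_def)
qed

lemma between_grid_points_in_cell:
  "(g 0 :: real) \<le> x \<Longrightarrow> x \<le> g n \<Longrightarrow> x \<notin> g ` {0..n} \<Longrightarrow> \<exists>j<n. x \<in> {g j<..<g (Suc j)}"
proof (induction n)
  case 0
  then show ?case by (auto simp: image_iff)
next
  case (Suc n)
  show ?case
  proof (cases "x \<le> g n")
    case True
    moreover have "x \<notin> g ` {0..n}" using Suc.prems by auto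
    ultimately obtain j where "j < n" "x \<in> {g j<..<g (Suc j)}" using Suc by blast
    then show ?thesis by (intro exI[of _ j]) auto
  next
    case False
    then show ?thesis using Suc.prems by (intro exI[of _ n]) auto
  qed
qed

lemma offgrid_in_cell:
  assumes "grid_partition b n g" "x \<in> offgrid b n g"
  obtains j where "j < n" "x \<in> {g j<..<g (Suc j)}"
  using assms between_grid_points_in_cell[of g x n]
  unfolding offgrid_def grid_partition_def by auto

lemma chi_mult_chi_eq_0:
  assumes "grid_partition b n g" "j < n" "k < n" "j \<noteq> k"
  shows "chi g j x * chi g k x = 0"
proof (cases "j < k")
  case True
  then have "g (Suc j) \<le> g k" using grid_partition_le[OF assms(1), of "Suc j" k] assms by auto
  then show ?thesis by (auto simp: chi_def)
next
  case False
  then have "g (Suc k) \<le> g j" using grid_partition_le[OF assms(1), of "Suc k" j] assms by auto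
  then show ?thesis by (auto simp: chi_def)
qed

lemma sum_chi_in_cell:
  assumes "grid_partition b n g" "j < n" "x \<in> {g j<..<g (Suc j)}"
  shows "(\<Sum>i<n. f i x * chi g i x) = f j x"
proof -
  have chi_j: "chi g j x = 1" using assms(3) by (simp add: chi_def)
  have "f i x * chi g i x = (if i = j then f j x else 0)" if "i < n" for i
    using chi_j chi_mult_chi_eq_0[OF assms(1) that assms(2), of x] by auto
  then have "(\<Sum>i<n. f i x * chi g i x) = (\<Sum>i<n. if i = j then f j x else 0)"
    by (intro sum.cong) auto
  also have "\<dots> = f j x" using assms(2) by simp
  finally show ?thesis .
qed

lemma Vspan_mult_const: "f \<in> Vspan l \<Longrightarrow> (\<lambda>x. c * f x) \<in> Vspan l"
proof -
  assume "f \<in> Vspan l"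
  then obtain d where "f = (\<lambda>x. \<Sum>h\<in>l. d h * h x)" by (auto simp: Vspan_def)
  then have "(\<lambda>x. c * f x) = (\<lambda>x. \<Sum>h\<in>l. (c * d h) * h x)"
    by (simp add: sum_distrib_left mult.assoc)
  then show ?thesis unfolding Vspan_def by (intro CollectI exI[of _ "\<lambda>h. c * d h"])
qed

lemma Vspan_member: "finite l \<Longrightarrow> f \<in> l \<Longrightarrow> f \<in> Vspan l"
proof -
  assume "finite l" "f \<in> l"
  then have "(\<Sum>h\<in>l. (if h = f then 1 else 0) * h x) = f x" for x
    by (simp add: if_distrib[of "\<lambda>c. c * _"] cong: if_cong)
  then show ?thesis unfolding Vspan_def by (intro CollectI exI[of _ "\<lambda>h. if h = f then 1 else 0"]) auto
qed

lemma C1_mult_const: "f \<in> C1 \<Longrightarrow> (\<lambda>x. c * f x) \<in> C1"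
proof -
  assume "f \<in> C1"
  then obtain f' where "\<forall>x. (f has_real_derivative f' x) (at x)" "continuous_on UNIV f'"
    by (auto simp: C1_def)
  then have "\<forall>x. ((\<lambda>x. c * f x) has_real_derivative c * f' x) (at x)"
    "continuous_on UNIV (\<lambda>x. c * f' x)"
    by (auto intro: DERIV_cmult continuous_on_mult_left)
  then show ?thesis unfolding C1_def by (intro CollectI exI[of _ "\<lambda>x. c * f' x"]) blast
qed

lemma C1_isCont: "f \<in> C1 \<Longrightarrow> isCont f x"
  unfolding C1_def using DERIV_isCont by blast

lemma piecewise_C1_restrict_to_box:
  assumes g: "grid_partition b n g" and f: "f \<in> Vspan l" "f \<in> C1"
  shows "piecewise_C1 l b n g (\<lambda>x. f x * chi_ab b (- b) b x)"
  unfolding piecewise_C1_def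
proof (intro exI[of _ "\<lambda>j. f"] conjI allI impI ballI)
  fix x assume x: "x \<in> offgrid b n g"
  then obtain j where j: "j < n" "x \<in> {g j<..<g (Suc j)}" using offgrid_in_cell[OF g] by blast
  have "x \<noteq> g 0" "x \<noteq> g n" "x \<in> {-b..b}" using x by (auto simp: offgrid_def)
  moreover have "g 0 = - b" "g n = b" using g by (simp_all add: grid_partition_def)
  ultimately have "- b < x" "x < b" by auto
  then have "chi_ab b (- b) b x = 1" by (simp add: chi_ab_def)
  then show "f x * chi_ab b (- b) b x = (\<Sum>j<n. f x * chi g j x)"
    using sum_chi_in_cell[OF g j, of "\<lambda>_. f"] by simp
qed (use f in auto)

lemma chi_ab_constant_on_cell:
  assumes g: "grid_partition b n g" and j: "j < n"
    and p: "p \<in> g ` {0..n}" and q: "q \<in> g ` {0..n}"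
    and x: "x \<in> {g j<..<g (Suc j)}" and y: "y \<in> {g j<..<g (Suc j)}"
  shows "chi_ab b p q x = chi_ab b p q y"
proof -
  have "p \<notin> {g j<..<g (Suc j)}" "q \<notin> {g j<..<g (Suc j)}"
    using p q grid_point_notin_cell[OF g _ j] by auto
  then have "x \<noteq> p" "x \<noteq> q" "y \<noteq> p" "y \<noteq> q" "p < x \<longleftrightarrow> p < y" "x < q \<longleftrightarrow> y < q"
    "x < p \<longleftrightarrow> y < p" "q < x \<longleftrightarrow> q < y"
    using x y by auto
  then show ?thesis unfolding chi_ab_def by (simp add: not_le)
qed

lemma piecewise_C1_mult_chi_ab:
  assumes g: "grid_partition b n g" and u: "piecewise_C1 l b n g u"
    and p: "p \<in> g ` {0..n}" and q: "q \<in> g ` {0..n}"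
  shows "piecewise_C1 l b n g (\<lambda>x. u x * chi_ab b p q x)"
proof -
  obtain v where v: "\<forall>j<n. v j \<in> Vspan l \<and> v j \<in> C1"
    and u_eq: "\<forall>x \<in> offgrid b n g. u x = (\<Sum>j<n. v j x * chi g j x)"
    using u by (auto simp: piecewise_C1_def)
  define c where "c j = chi_ab b p q ((g j + g (Suc j)) / 2)" for j
  have chi_ab_c: "chi g j x * chi_ab b p q x = chi g j x * c j" if "j < n" for j x
  proof (cases "x \<in> {g j<..<g (Suc j)}")
    case True
    have "g j < g (Suc j)" using g that by (simp add: grid_partition_def)
    then have "(g j + g (Suc j)) / 2 \<in> {g j<..<g (Suc j)}" by simp
    then show ?thesis
      unfolding c_def using chi_ab_constant_on_cell[OF g that p q True] by simp
  next
    case False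
    then show ?thesis by (auto simp: chi_def)
  qed
  show ?thesis
    unfolding piecewise_C1_def
  proof (intro exI[of _ "\<lambda>j x. c j * v j x"] conjI allI impI ballI)
    fix x assume "x \<in> offgrid b n g"
    then have "u x * chi_ab b p q x = (\<Sum>j<n. v j x * (chi g j x * chi_ab b p q x))"
      using u_eq by (simp add: sum_distrib_right mult.assoc)
    also have "\<dots> = (\<Sum>j<n. c j * v j x * chi g j x)"
      using chi_ab_c by (intro sum.cong) auto
    finally show "u x * chi_ab b p q x = (\<Sum>j<n. c j * v j x * chi g j x)" .
  qed (use v in \<open>simp_all add: Vspan_mult_const C1_mult_const\<close>)
qed

lemma piecewise_C1_one_sided_limits:
  assumes g: "grid_partition b n g" and u: "piecewise_C1 l b n g u" and j: "j < n"
  shows "\<exists>L. (u \<longlongrightarrow> L) (at_right (g j))" "\<exists>L. (u \<longlongrightarrow> L) (at_left (g (Suc j)))"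
proof -
  obtain v where v: "\<forall>j<n. v j \<in> C1"
    and u_eq: "\<forall>x \<in> offgrid b n g. u x = (\<Sum>j<n. v j x * chi g j x)"
    using u by (auto simp: piecewise_C1_def)
  have on_cell: "v j x = u x" if "x \<in> {g j<..<g (Suc j)}" for x
    using u_eq cell_subset_offgrid[OF g j] sum_chi_in_cell[OF g j that] that by auto
  have lt: "g j < g (Suc j)" using g j by (simp add: grid_partition_def)
  have cont: "isCont (v j) y" for y using C1_isCont v j by blast
  have "(u \<longlongrightarrow> v j (g j)) (at_right (g j))"
  proof (rule Lim_transform_eventually)
    show "(v j \<longlongrightarrow> v j (g j)) (at_right (g j))"
      using cont[of "g j"] unfolding isCont_def by (rule tendsto_mono[OF at_within_le_at])
    show "\<forall>\<^sub>F x in at_right (g j). v j x = u x"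
      using eventually_at_right_real[OF lt] by eventually_elim (use on_cell in auto)
  qed
  then show "\<exists>L. (u \<longlongrightarrow> L) (at_right (g j))" ..
  have "(u \<longlongrightarrow> v j (g (Suc j))) (at_left (g (Suc j)))"
  proof (rule Lim_transform_eventually)
    show "(v j \<longlongrightarrow> v j (g (Suc j))) (at_left (g (Suc j)))"
      using cont[of "g (Suc j)"] unfolding isCont_def by (rule tendsto_mono[OF at_within_le_at])
    show "\<forall>\<^sub>F x in at_left (g (Suc j)). v j x = u x"
      using eventually_at_left_real[OF lt] by eventually_elim (use on_cell in auto)
  qed
  then show "\<exists>L. (u \<longlongrightarrow> L) (at_left (g (Suc j)))" ..
qed

lemma hinner_cells_orthogonal:
  assumes "grid_partition b n g" "j < n" "k < n" "j \<noteq> k"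
  shows "hinner (\<lambda>x. u x * chi g j x) (\<lambda>x. v x * chi g k x) = 0"
proof -
  have "(\<lambda>x. u x * chi g j x * (v x * chi g k x)) = (\<lambda>x. u x * v x * (chi g j x * chi g k x))"
    by (simp add: ac_simps)
  then show ?thesis using chi_mult_chi_eq_0[OF assms] by (simp add: hinner_def)
qed

lemma piecewise_C1_iff_sum_VI:
  "piecewise_C1 l b n g u \<longleftrightarrow> (\<exists>w. (\<forall>j<n. w j \<in> VI l g j)
     \<and> (\<forall>x \<in> offgrid b n g. u x = (\<Sum>j<n. w j x)))"
proof
  assume "piecewise_C1 l b n g u"
  then obtain v where "\<forall>j<n. v j \<in> Vspan l \<and> v j \<in> C1"
    "\<forall>x \<in> offgrid b n g. u x = (\<Sum>j<n. v j x * chi g j x)"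
    by (auto simp: piecewise_C1_def)
  then show "\<exists>w. (\<forall>j<n. w j \<in> VI l g j) \<and> (\<forall>x \<in> offgrid b n g. u x = (\<Sum>j<n. w j x))"
    by (intro exI[of _ "\<lambda>j x. v j x * chi g j x"]) (auto simp: VI_def)
next
  assume "\<exists>w. (\<forall>j<n. w j \<in> VI l g j) \<and> (\<forall>x \<in> offgrid b n g. u x = (\<Sum>j<n. w j x))"
  then obtain w where w: "\<forall>j<n. w j \<in> VI l g j" and u_eq: "\<forall>x \<in> offgrid b n g. u x = (\<Sum>j<n. w j x)"
    by blast
  have "\<forall>j. \<exists>v. j < n \<longrightarrow> v \<in> Vspan l \<and> v \<in> C1 \<and> w j = (\<lambda>x. v x * chi g j x)"
    using w by (auto simp: VI_def)
  then obtain v where v: "\<And>j. j < n \<Longrightarrow> v j \<in> Vspan l \<and> v j \<in> C1 \<and> w j = (\<lambda>x. v j x * chi g j x)"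
    by metis
  then show "piecewise_C1 l b n g u"
    unfolding piecewise_C1_def using u_eq by (intro exI[of _ v]) auto
qed

lemma VI_sum_unique:
  assumes g: "grid_partition b n g"
    and w: "\<forall>j<n. w j \<in> VI l g j \<and> w' j \<in> VI l g j"
    and eq: "\<forall>x \<in> offgrid b n g. (\<Sum>j<n. w j x) = (\<Sum>j<n. w' j x)"
  shows "\<forall>j<n. w j = w' j"
proof -
  have "\<forall>j. \<exists>v v'. j < n \<longrightarrow> w j = (\<lambda>x. v x * chi g j x) \<and> w' j = (\<lambda>x. v' x * chi g j x)"
    using w by (auto simp: VI_def)
  then obtain v v' where vv': "\<And>j. j < n \<Longrightarrow> w j = (\<lambda>x. v j x * chi g j x) \<and> w' j = (\<lambda>x. v' j x * chi g j x)"
    by metis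
  have "w j x = w' j x" if j: "j < n" for j x
  proof (cases "x \<in> {g j<..<g (Suc j)}")
    case True
    have "v j x = (\<Sum>i<n. v i x * chi g i x)" using sum_chi_in_cell[OF g j True] by simp
    also have "\<dots> = (\<Sum>i<n. w i x)" using vv' by (intro sum.cong) auto
    also have "\<dots> = (\<Sum>i<n. w' i x)" using eq cell_subset_offgrid[OF g j] True by auto
    also have "\<dots> = (\<Sum>i<n. v' i x * chi g i x)" using vv' by (intro sum.cong) auto
    also have "\<dots> = v' j x" using sum_chi_in_cell[OF g j True] by simp
    finally show ?thesis using vv'[OF j] True by (simp add: chi_def)
  next
    case False
    then show ?thesis using vv'[OF j] by (auto simp: chi_def)
  qed
  then show ?thesis by blast
qed

lemma piecewise_C1_limits_at_inner_grid_points: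
  assumes g: "grid_partition b n g" and u: "piecewise_C1 l b n g u"
  shows "\<forall>j. 1 \<le> j \<and> j \<le> n - 1 \<longrightarrow>
    (\<exists>L. (u \<longlongrightarrow> L) (at_right (g j))) \<and> (\<exists>L. (u \<longlongrightarrow> L) (at_left (g j)))"
proof (intro allI impI)
  fix j assume "1 \<le> j \<and> j \<le> n - 1"
  then have "j < n" "j - 1 < n" "Suc (j - 1) = j" by auto
  then show "(\<exists>L. (u \<longlongrightarrow> L) (at_right (g j))) \<and> (\<exists>L. (u \<longlongrightarrow> L) (at_left (g j)))"
    using piecewise_C1_one_sided_limits[OF g u] by metis
qed

lemma piecewise_C1_limits_at_endpoints:
  assumes g: "grid_partition b n g" and u: "piecewise_C1 l b n g u" and "b > 0"
  shows "(\<exists>L. (u \<longlongrightarrow> L) (at_right (g 0))) \<and> (\<exists>L. (u \<longlongrightarrow> L) (at_left (g n)))"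
proof -
  have "n > 0" using g \<open>b > 0\<close> by (cases n) (auto simp: grid_partition_def)
  then have "0 < n" "n - 1 < n" "Suc (n - 1) = n" by auto
  then show ?thesis using piecewise_C1_one_sided_limits[OF g u] by metis
qed

context
  fixes U :: "idx filter" and \<beta> \<eta> :: "idx \<Rightarrow> real" and ell :: "idx \<Rightarrow> nat"
    and \<gamma> :: "idx \<Rightarrow> nat \<Rightarrow> real"
  assumes G: "grid U \<beta> \<eta> ell \<gamma>"
begin

lemma inUR_restrict_to_box:
  assumes "fine_ultrafilter U" "f \<in> C1"
  shows "inUR U \<beta> ell \<gamma> (\<lambda>l x. f x * chi_ab (\<beta> l) (- \<beta> l) (\<beta> l) x)"
proof -
  have "eventually (\<lambda>l. finite l \<and> f \<in> l \<and> grid_partition (\<beta> l) (ell l) (\<gamma> l)) U"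
    using assms(1) grid_eventually_partition[OF G]
    unfolding fine_ultrafilter_def by (intro eventually_conj) auto
  then show ?thesis unfolding inUR_iff_eventually_piecewise_C1
    by eventually_elim (use assms(2) in \<open>intro piecewise_C1_restrict_to_box Vspan_member, auto\<close>)
qed

lemma inUR_mult_chi_ab:
  assumes "inUR U \<beta> ell \<gamma> u" "in_grid U ell \<gamma> a" "in_grid U ell \<gamma> b"
  shows "inUR U \<beta> ell \<gamma> (\<lambda>l x. u l x * chi_ab (\<beta> l) (a l) (b l) x)"
  using grid_eventually_partition[OF G] assms
  unfolding inUR_iff_eventually_piecewise_C1 in_grid_def
  by eventually_elim (rule piecewise_C1_mult_chi_ab)

lemma inUR_limits_at_inner_grid_points:
  assumes "inUR U \<beta> ell \<gamma> u"
  shows "eventually (\<lambda>l. \<forall>j. 1 \<le> j \<and> j \<le> ell l - 1 \<longrightarrow>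
    (\<exists>L. (u l \<longlongrightarrow> L) (at_right (\<gamma> l j))) \<and> (\<exists>L. (u l \<longlongrightarrow> L) (at_left (\<gamma> l j)))) U"
  using grid_eventually_partition[OF G] assms unfolding inUR_iff_eventually_piecewise_C1
  by eventually_elim (rule piecewise_C1_limits_at_inner_grid_points)

lemma inUR_limits_at_endpoints:
  assumes "inUR U \<beta> ell \<gamma> u"
  shows "eventually (\<lambda>l. (\<exists>L. (u l \<longlongrightarrow> L) (at_right (\<gamma> l 0)))
    \<and> (\<exists>L. (u l \<longlongrightarrow> L) (at_left (\<gamma> l (ell l))))) U"
  using grid_eventually_partition[OF G] grid_eventually_pos[OF G] assms
  unfolding inUR_iff_eventually_piecewise_C1
  by eventually_elim (rule piecewise_C1_limits_at_endpoints)

lemma hinner_cells_eventually_orthogonal: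
  "eventually (\<lambda>l. \<forall>j < ell l. \<forall>k < ell l. j \<noteq> k \<longrightarrow>
    hinner (\<lambda>x. u l x * chi (\<gamma> l) j x) (\<lambda>x. v l x * chi (\<gamma> l) k x) = 0) U"
  using grid_eventually_partition[OF G]
proof eventually_elim
  case (elim l)
  show ?case using hinner_cells_orthogonal[OF elim] by blast
qed

lemma inUR_iff_sum_VI:
  "inUR U \<beta> ell \<gamma> u \<longleftrightarrow> (\<exists>w :: idx \<Rightarrow> nat \<Rightarrow> real \<Rightarrow> real. eventually (\<lambda>l.
      (\<forall>j < ell l. w l j \<in> VI l (\<gamma> l) j)
    \<and> (\<forall>x \<in> offgrid (\<beta> l) (ell l) (\<gamma> l). u l x = (\<Sum>j<ell l. w l j x))) U)"
  by (simp only: inUR_iff_eventually_piecewise_C1 piecewise_C1_iff_sum_VI eventually_ex)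

lemma VI_sum_eventually_unique:
  assumes "eventually (\<lambda>l.
      (\<forall>j < ell l. w l j \<in> VI l (\<gamma> l) j \<and> w' l j \<in> VI l (\<gamma> l) j)
    \<and> (\<forall>x \<in> offgrid (\<beta> l) (ell l) (\<gamma> l). (\<Sum>j<ell l. w l j x) = (\<Sum>j<ell l. w' l j x))) U"
  shows "eventually (\<lambda>l. \<forall>j < ell l. w l j = w' l j) U"
  using grid_eventually_partition[OF G] assms
proof eventually_elim
  case (elim l)
  show ?case using VI_sum_unique[OF elim(1)] elim(2) by blast
qed

end

theorem mainTheorem3:
  fixes U :: "idx filter" and \<beta> \<eta> :: "idx \<Rightarrow> real" and ell :: "idx \<Rightarrow> nat"
    and \<gamma> :: "idx \<Rightarrow> nat \<Rightarrow> real"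
  assumes "fine_ultrafilter U" and "grid U \<beta> \<eta> ell \<gamma>"
  shows
   "(\<forall>f \<in> C1. inUR U \<beta> ell \<gamma> (\<lambda>l x. f x * chi_ab (\<beta> l) (- \<beta> l) (\<beta> l) x))
  \<and> (\<forall>u a b. inUR U \<beta> ell \<gamma> u \<and> in_grid U ell \<gamma> a \<and> in_grid U ell \<gamma> b \<longrightarrow>
        inUR U \<beta> ell \<gamma> (\<lambda>l x. u l x * chi_ab (\<beta> l) (a l) (b l) x))
  \<and> (\<forall>u. inUR U \<beta> ell \<gamma> u \<longrightarrow> eventually (\<lambda>l. \<forall>j. 1 \<le> j \<and> j \<le> ell l - 1 \<longrightarrow>
        (\<exists>L. (u l \<longlongrightarrow> L) (at_right (\<gamma> l j))) \<and> (\<exists>L. (u l \<longlongrightarrow> L) (at_left (\<gamma> l j)))) U)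
  \<and> (\<forall>u. inUR U \<beta> ell \<gamma> u \<longrightarrow> eventually (\<lambda>l.
        (\<exists>L. (u l \<longlongrightarrow> L) (at_right (\<gamma> l 0))) \<and> (\<exists>L. (u l \<longlongrightarrow> L) (at_left (\<gamma> l (ell l))))) U)
  \<and> (\<forall>u v. ultraC1 U u \<and> ultraC1 U v \<longrightarrow> eventually (\<lambda>l. \<forall>j < ell l. \<forall>k < ell l. j \<noteq> k \<longrightarrow>
        hinner (\<lambda>x. u l x * chi (\<gamma> l) j x) (\<lambda>x. v l x * chi (\<gamma> l) k x) = 0) U)
  \<and> (\<forall>u. inUR U \<beta> ell \<gamma> u \<longleftrightarrow> (\<exists>w :: idx \<Rightarrow> nat \<Rightarrow> real \<Rightarrow> real. eventually (\<lambda>l.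
        (\<forall>j < ell l. w l j \<in> VI l (\<gamma> l) j)
      \<and> (\<forall>x \<in> offgrid (\<beta> l) (ell l) (\<gamma> l). u l x = (\<Sum>j<ell l. w l j x))) U))
  \<and> (\<forall>w w' :: idx \<Rightarrow> nat \<Rightarrow> real \<Rightarrow> real. eventually (\<lambda>l.
        (\<forall>j < ell l. w l j \<in> VI l (\<gamma> l) j \<and> w' l j \<in> VI l (\<gamma> l) j)
      \<and> (\<forall>x \<in> offgrid (\<beta> l) (ell l) (\<gamma> l). (\<Sum>j<ell l. w l j x) = (\<Sum>j<ell l. w' l j x))) U
      \<longrightarrow> eventually (\<lambda>l. \<forall>j < ell l. w l j = w' l j) U)"
  using inUR_restrict_to_box[OF assms(2,1)] inUR_mult_chi_ab[OF assms(2)]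
    inUR_limits_at_inner_grid_points[OF assms(2)] inUR_limits_at_endpoints[OF assms(2)]
    hinner_cells_eventually_orthogonal[OF assms(2)] inUR_iff_sum_VI[OF assms(2)]
    VI_sum_eventually_unique[OF assms(2)]
  by blast

end
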